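(* Let $p$ and $q$ be probability densities on $\mathbb{R}^d$ with $p\propto e^{-V}$, where $\nabla V$ is $L$-Lipschitz, and $\chi^2(q\|p)<\infty$. Let $\phi=q/p$ and $\psi=\phi/\mathbb{E}_p\phi^2$ (so that $\psi q$ is a probability density). Then $$\mathbb{E}_{\psi q}\big[\|\nabla\ln p(x)\|^2\big]\le\frac{4}{\chi^2(q\|p)+1}\,\mathcal{E}_p\Big(\frac qp\Big)+2dL.$$
   Context: $\chi^2(q\|p)=\int q^2/p-1=\mathbb{E}_p\phi^2-1$. The relative Fisher information is $\mathcal{E}_p(q/p):=\int_{\mathbb{R}^d}\|\nabla (q/p)(x)\|^2p(x)\,dx$. *)

theory Defs
  imports "HOL-Analysis.Analysis"
begin

definition chi2 :: "('a::euclidean_space \<Rightarrow> real) \<Rightarrow> ('a \<Rightarrow> real) \<Rightarrow> real" where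
  "chi2 q p = (LINT x|lborel. (q x)\<^sup>2 / p x) - 1"

text \<open>Relative Fisher information E_p(phi) = int ||grad phi||^2 p, given the gradient field
  of phi (extended-valued, as a nonnegative integral).\<close>
definition rel_fisher :: "('a::euclidean_space \<Rightarrow> real) \<Rightarrow> ('a \<Rightarrow> 'a) \<Rightarrow> ennreal" where
  "rel_fisher p gphi = (\<integral>\<^sup>+ x. ennreal ((norm (gphi x))\<^sup>2 * p x) \<partial>lborel)"

end

(*
  Write p = exp (- W) with W = V + ln (int e^(-V)), and phi = q / p.  Then psi q = phi^2 p / N with
  N = E_p phi^2 = chi^2(q||p) + 1, and the claim is the bound
    int phi^2 |grad V|^2 p  <=  4 int |grad phi|^2 p + 2 d L int phi^2 p
  divided by N.  By Fubini it suffices to prove, on every coordinate line, the one-dimensional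
  inequality
    int g^2 H^2 e^(-v)  <=  4 int g'^2 e^(-v) + 2 L int g^2 e^(-v)       (v' = H, H L-Lipschitz).
  On an interval it follows by integrating (g^2 H e^(-v))' = (2 g g' H + g^2 H' - g^2 H^2) e^(-v),
  with 2 g g' H <= g^2 H^2 / 2 + 2 g'^2 and H' <= L, up to boundary terms g^2 e^(-v) |H|.
  As H is merely Lipschitz, H is replaced by difference quotients (v (t + s) - v t) / s, and s -> 0.
  Since |H| grows at most linearly while g^2 e^(-v) is integrable, there are arbitrarily remote
  endpoints at which the boundary terms are arbitrarily small.
*)

theory Submission
  imports Defs
begin

section \<open>Integration by parts on an interval\<close>

lemma weighted_score_integrand_bound:
  fixes g G H w w' P \<delta> L :: real
  assumes "0 \<le> P" "\<bar>w - H\<bar> \<le> \<delta>" "w' \<le> L"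
  shows "(1/2) * (g\<^sup>2 * H\<^sup>2 * P) - 2 * (G\<^sup>2 * P) - (L + \<delta>\<^sup>2 / 2) * (g\<^sup>2 * P)
    \<le> g\<^sup>2 * w * H * P - 2 * g * G * w * P - g\<^sup>2 * w' * P"
proof -
  have "(w - H)\<^sup>2 \<le> \<delta>\<^sup>2"
    using power_mono[OF assms(2) abs_ge_zero, of 2] by simp
  then have "H\<^sup>2 / 2 - \<delta>\<^sup>2 / 2 - L \<le> w * H - w\<^sup>2 / 2 - w'"
    using \<open>w' \<le> L\<close> by (simp add: power2_diff)
  from mult_left_mono[OF this, of "g\<^sup>2 * P"]
  have "g\<^sup>2 * P * (H\<^sup>2 / 2 - \<delta>\<^sup>2 / 2 - L) \<le> g\<^sup>2 * P * (w * H - w\<^sup>2 / 2 - w')"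
    using \<open>0 \<le> P\<close> by simp
  moreover have "2 * (g * w) * G * P \<le> ((g * w)\<^sup>2 / 2 + 2 * G\<^sup>2) * P"
    using sum_squares_ge_zero[of "g * w - 2 * G" 0] \<open>0 \<le> P\<close>
    by (intro mult_right_mono) (auto simp: power2_eq_square algebra_simps)
  ultimately show ?thesis
    by (simp add: power2_eq_square algebra_simps)
qed

lemma weighted_score_bound_Icc_approx:
  fixes g G v H w w' :: "real \<Rightarrow> real"
  assumes g: "\<And>t. (g has_real_derivative G t) (at t)"
    and v: "\<And>t. (v has_real_derivative H t) (at t)"
    and w: "\<And>t. (w has_real_derivative w' t) (at t)"
    and w'_le: "\<And>t. w' t \<le> L"
    and w_approx: "\<And>t. \<bar>w t - H t\<bar> \<le> \<delta>"
    and H: "continuous_on {a..b} H"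
    and G: "(\<lambda>t. (G t)\<^sup>2 * exp (- v t)) integrable_on {a..b}"
    and "a \<le> b"
  shows "integral {a..b} (\<lambda>t. (g t)\<^sup>2 * (H t)\<^sup>2 * exp (- v t))
    \<le> 4 * integral {a..b} (\<lambda>t. (G t)\<^sup>2 * exp (- v t))
      + (2 * L + \<delta>\<^sup>2) * integral {a..b} (\<lambda>t. (g t)\<^sup>2 * exp (- v t))
      + 2 * ((g a)\<^sup>2 * exp (- v a) * (\<bar>H a\<bar> + \<delta>))
      + 2 * ((g b)\<^sup>2 * exp (- v b) * (\<bar>H b\<bar> + \<delta>))"
proof -
  define P where "P t = exp (- v t)" for t
  define k where "k t = (g t)\<^sup>2 * w t * P t" for t
  define k' where "k' t = 2 * g t * G t * w t * P t + (g t)\<^sup>2 * w' t * P t - (g t)\<^sup>2 * w t * H t * P t" for t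
  define A where "A = integral {a..b} (\<lambda>t. (g t)\<^sup>2 * (H t)\<^sup>2 * P t)"
  define B where "B = integral {a..b} (\<lambda>t. (G t)\<^sup>2 * P t)"
  define C where "C = integral {a..b} (\<lambda>t. (g t)\<^sup>2 * P t)"
  have "(k has_real_derivative k' t) (at t)" for t
    unfolding k_def k'_def P_def
    by (auto intro!: derivative_eq_intros g v w simp: power2_eq_square algebra_simps)
  then have ftc: "((\<lambda>t. - k' t) has_integral - (k b - k a)) {a..b}"
    using \<open>a \<le> b\<close> by (intro has_integral_neg fundamental_theorem_of_calculus)
      (auto simp flip: has_real_derivative_iff_has_vector_derivative intro: has_field_derivative_at_within)
  have "continuous_on {a..b} g" "continuous_on {a..b} v"
    using g v by (auto intro!: continuous_at_imp_continuous_on DERIV_isCont)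
  then have lhs: "((\<lambda>t. (1/2) * ((g t)\<^sup>2 * (H t)\<^sup>2 * P t) - 2 * ((G t)\<^sup>2 * P t)
      - (L + \<delta>\<^sup>2 / 2) * ((g t)\<^sup>2 * P t)) has_integral ((1/2) * A - 2 * B - (L + \<delta>\<^sup>2 / 2) * C)) {a..b}"
    using G unfolding A_def B_def C_def P_def
    by (intro has_integral_diff has_integral_mult_right)
      (auto intro!: integrable_integral integrable_continuous_interval continuous_intros H)
  have "(1/2) * ((g t)\<^sup>2 * (H t)\<^sup>2 * P t) - 2 * ((G t)\<^sup>2 * P t)
      - (L + \<delta>\<^sup>2 / 2) * ((g t)\<^sup>2 * P t) \<le> - k' t" for t
    using weighted_score_integrand_bound[where g = "g t" and G = "G t" and H = "H t" and w = "w t"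
        and w' = "w' t" and P = "P t"] w_approx[of t] w'_le[of t]
    unfolding k'_def P_def by (simp add: algebra_simps)
  then have "(1/2) * A - 2 * B - (L + \<delta>\<^sup>2 / 2) * C \<le> - (k b - k a)"
    using has_integral_le[OF lhs ftc] by blast
  moreover have "(g a)\<^sup>2 * P a * w a \<le> (g a)\<^sup>2 * P a * (\<bar>H a\<bar> + \<delta>)"
    "(g b)\<^sup>2 * P b * (- w b) \<le> (g b)\<^sup>2 * P b * (\<bar>H b\<bar> + \<delta>)"
    using w_approx[of a] w_approx[of b] unfolding P_def by (intro mult_left_mono; simp; linarith)+
  then have "k a \<le> (g a)\<^sup>2 * P a * (\<bar>H a\<bar> + \<delta>)" "- k b \<le> (g b)\<^sup>2 * P b * (\<bar>H b\<bar> + \<delta>)"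
    unfolding k_def by (simp_all add: mult_ac)
  ultimately show ?thesis
    unfolding A_def B_def C_def P_def by (simp add: algebra_simps)
qed

lemma difference_quotient_error_le:
  fixes v H :: "real \<Rightarrow> real"
  assumes v: "\<And>t. (v has_real_derivative H t) (at t)"
    and H: "L-lipschitz_on UNIV H" and "0 < s"
  shows "\<bar>(v (t + s) - v t) / s - H t\<bar> \<le> L * s"
proof -
  obtain z where z: "t < z" "z < t + s" "v (t + s) - v t = (t + s - t) * H z"
    using MVT2[of t "t + s" v H] v \<open>0 < s\<close> by auto
  have "\<bar>H z - H t\<bar> \<le> L * \<bar>z - t\<bar>"
    using lipschitz_onD[OF H] by (simp add: dist_real_def)
  also have "\<dots> \<le> L * s"
    using z lipschitz_on_nonneg[OF H] by (intro mult_left_mono) auto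
  finally show ?thesis
    using z(3) \<open>0 < s\<close> by simp
qed

lemma weighted_score_bound_Icc:
  fixes g G v H :: "real \<Rightarrow> real"
  assumes g: "\<And>t. (g has_real_derivative G t) (at t)"
    and v: "\<And>t. (v has_real_derivative H t) (at t)"
    and H: "L-lipschitz_on UNIV H"
    and G: "(\<lambda>t. (G t)\<^sup>2 * exp (- v t)) integrable_on {a..b}"
    and "a \<le> b"
  shows "integral {a..b} (\<lambda>t. (g t)\<^sup>2 * (H t)\<^sup>2 * exp (- v t))
    \<le> 4 * integral {a..b} (\<lambda>t. (G t)\<^sup>2 * exp (- v t))
      + 2 * L * integral {a..b} (\<lambda>t. (g t)\<^sup>2 * exp (- v t))
      + 2 * ((g a)\<^sup>2 * exp (- v a) * \<bar>H a\<bar>) + 2 * ((g b)\<^sup>2 * exp (- v b) * \<bar>H b\<bar>)"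
    (is "?A \<le> ?R")
proof -
  define C where "C = integral {a..b} (\<lambda>t. (g t)\<^sup>2 * exp (- v t))"
  define E where "E = (g a)\<^sup>2 * exp (- v a) + (g b)\<^sup>2 * exp (- v b)"
  have contH: "continuous_on {a..b} H"
    using lipschitz_on_continuous_on[OF H] by (rule continuous_on_subset) simp
  have approx: "?A \<le> ?R + (L * s)\<^sup>2 * C + 2 * (L * s) * E" if "0 < s" for s
  proof -
    have dq: "((\<lambda>t. (v (t + s) - v t) / s) has_real_derivative (H (t + s) - H t) / s) (at t)" for t
      using DERIV_shift[THEN iffD1, OF v] that by (auto intro!: derivative_eq_intros v)
    have slope_le: "(H (t + s) - H t) / s \<le> L" for t
      using lipschitz_onD[OF H, of "t + s" t] that by (simp add: dist_real_def divide_le_eq)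
    from weighted_score_bound_Icc_approx[OF g v dq slope_le difference_quotient_error_le[OF v H that] contH G
        \<open>a \<le> b\<close>]
    show ?thesis
      unfolding C_def E_def by (simp add: algebra_simps)
  qed
  have "((\<lambda>s. ?R + (L * s)\<^sup>2 * C + 2 * (L * s) * E) \<longlongrightarrow> ?R) (at_right 0)"
    by (auto intro!: tendsto_eq_intros)
  then show ?thesis
    by (rule tendsto_lowerbound) (auto intro: eventually_mono[OF eventually_at_right_less] approx)
qed

section \<open>The whole line: removing the boundary terms\<close>

lemma finite_nn_integral_ex_ge_small:
  fixes F :: "real \<Rightarrow> real"
  assumes [measurable]: "F \<in> borel_measurable borel" and F: "\<And>t. 0 \<le> F t"
    and fin: "(\<integral>\<^sup>+t. F t \<partial>lborel) \<noteq> \<infinity>" and "0 < e"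
  shows "\<exists>b\<ge>T. (1 + \<bar>b\<bar>) * F b \<le> e"
proof (rule ccontr)
  assume "\<not> ?thesis"
  then have big: "e < (1 + \<bar>b\<bar>) * F b" if "T \<le> b" for b
    using that by force
  obtain C where C: "(\<integral>\<^sup>+t. F t \<partial>lborel) = ennreal C" "0 \<le> C"
    using fin by (cases "\<integral>\<^sup>+t. F t \<partial>lborel" rule: ennreal_cases) auto
  define T0 where "T0 = max T 0"
  \<comment> \<open>Beyond \<open>T0\<close>, \<open>F t > e / (1 + t)\<close>, whose integral over \<open>[T0, X]\<close> is \<open>C + e\<close>.\<close>
  define X where "X = (1 + T0) * exp (C / e + 1) - 1"
  have "1 \<le> exp (C / e + 1)"
    using C(2) \<open>0 < e\<close> by simp
  then have "(1 + T0) * 1 \<le> (1 + T0) * exp (C / e + 1)"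
    by (intro mult_left_mono) (auto simp: T0_def)
  then have "T0 \<le> X"
    unfolding X_def by (simp add: algebra_simps)
  have "ennreal (e * ln (1 + X) - e * ln (1 + T0)) = (\<integral>\<^sup>+t. ennreal (e / (1 + t)) * indicator {T0..X} t \<partial>lborel)"
    using \<open>T0 \<le> X\<close> \<open>0 < e\<close> unfolding T0_def
    by (intro nn_integral_FTC_Icc[symmetric]) (auto intro!: derivative_eq_intros)
  also have "\<dots> \<le> (\<integral>\<^sup>+t. F t \<partial>lborel)"
  proof (intro nn_integral_mono)
    fix t
    show "ennreal (e / (1 + t)) * indicator {T0..X} t \<le> ennreal (F t)"
    proof (cases "t \<in> {T0..X}")
      case True
      then have "e < (1 + t) * F t" "0 < 1 + t"
        using big[of t] by (auto simp: T0_def)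
      then have "e / (1 + t) \<le> F t"
        by (simp add: divide_le_eq mult.commute)
      then show ?thesis
        using True by (simp add: ennreal_leI)
    qed simp
  qed
  finally have "e * ln (1 + X) - e * ln (1 + T0) \<le> C"
    using C by simp
  moreover have "ln (1 + X) = ln (1 + T0) + C / e + 1"
    unfolding X_def T0_def by (simp add: ln_mult)
  ultimately show False
    using \<open>0 < e\<close> by (simp add: algebra_simps)
qed

lemma finite_nn_integral_ex_Icc_small:
  fixes F h :: "real \<Rightarrow> real"
  assumes F_meas [measurable]: "F \<in> borel_measurable borel" and F: "\<And>t. 0 \<le> F t"
    and fin: "(\<integral>\<^sup>+t. F t \<partial>lborel) \<noteq> \<infinity>"
    and h: "\<And>t. \<bar>h t\<bar> \<le> M * (1 + \<bar>t\<bar>)" and "0 \<le> M" and "0 < e"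
  shows "\<exists>a b. a \<le> - T \<and> T \<le> b \<and> F a * \<bar>h a\<bar> \<le> e \<and> F b * \<bar>h b\<bar> \<le> e"
proof -
  have small: "F t * \<bar>h t\<bar> \<le> e" if "(1 + \<bar>t\<bar>) * F t \<le> e / (M + 1)" for t
  proof -
    have "F t * \<bar>h t\<bar> \<le> M * ((1 + \<bar>t\<bar>) * F t)"
      using mult_left_mono[OF h F] by (simp add: mult_ac)
    also have "\<dots> \<le> M * (e / (M + 1))"
      using that \<open>0 \<le> M\<close> by (rule mult_left_mono)
    also have "\<dots> \<le> e"
      using \<open>0 \<le> M\<close> \<open>0 < e\<close> by (simp add: field_simps)
    finally show ?thesis .
  qed
  have "0 < e / (M + 1)"
    using \<open>0 \<le> M\<close> \<open>0 < e\<close> by simp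
  moreover have "(\<integral>\<^sup>+t. F (- t) \<partial>lborel) = (\<integral>\<^sup>+t. F t \<partial>lborel)"
    using nn_integral_real_affine[of "\<lambda>t. ennreal (F t)" "-1" 0] by simp
  ultimately obtain a b where "T \<le> a" "(1 + \<bar>- a\<bar>) * F (- a) \<le> e / (M + 1)"
    and "T \<le> b" "(1 + \<bar>b\<bar>) * F b \<le> e / (M + 1)"
    using finite_nn_integral_ex_ge_small[of "\<lambda>t. F (- t)" "e / (M + 1)" T]
      finite_nn_integral_ex_ge_small[OF F_meas F fin, of "e / (M + 1)" T] F fin by auto
  then show ?thesis
    by (intro exI[of _ "- a"] exI[of _ b]) (auto intro: small)
qed

lemma nn_integral_le_if_Icc_le:
  fixes f :: "real \<Rightarrow> ennreal"
  assumes [measurable]: "f \<in> borel_measurable borel"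
    and le: "\<And>n::nat. (\<integral>\<^sup>+t. f t * indicator {- real n..real n} t \<partial>lborel) \<le> c"
  shows "(\<integral>\<^sup>+t. f t \<partial>lborel) \<le> c"
proof -
  have "(SUP n. f t * indicator {- real n..real n} t) = f t" for t
  proof (rule antisym)
    obtain n :: nat where "\<bar>t\<bar> \<le> real n"
      using real_arch_simple by blast
    then show "f t \<le> (SUP n. f t * indicator {- real n..real n} t)"
      by (intro SUP_upper2[of n]) (auto simp: indicator_def)
  qed (auto intro: SUP_least simp: indicator_def)
  moreover have "incseq (\<lambda>n t. f t * indicator {- real n..real n} t)"
    by (intro monoI le_funI mult_left_mono) (auto simp: indicator_def)
  ultimately have "(\<integral>\<^sup>+t. f t \<partial>lborel) = (SUP n. \<integral>\<^sup>+t. f t * indicator {- real n..real n} t \<partial>lborel)"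
    using nn_integral_monotone_convergence_SUP[of "\<lambda>n t. f t * indicator {- real n..real n} t" lborel]
    by simp
  also have "\<dots> \<le> c"
    by (intro SUP_least le)
  finally show ?thesis .
qed

lemma borel_measurable_has_derivative:
  fixes f :: "'a::euclidean_space \<Rightarrow> 'b::euclidean_space"
  assumes "\<And>x. (f has_derivative f' x) (at x)"
  shows "f \<in> borel_measurable borel"
  using assms by (intro borel_measurable_continuous_onI continuous_at_imp_continuous_on)
    (auto dest: has_derivative_continuous)

lemma integrable_nonneg_Icc:
  fixes f :: "real \<Rightarrow> real"
  assumes f: "integrable lborel f" and nonneg: "\<And>t. 0 \<le> f t"
  shows "f integrable_on {a..b}" "integral {a..b} f \<le> (\<integral>t. f t \<partial>lborel)"
proof -
  have Icc: "set_integrable lborel {a..b} f"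
    using integrable_mult_indicator[OF _ f] unfolding set_integrable_def by simp
  then show "f integrable_on {a..b}"
    by (rule set_borel_integral_eq_integral)
  have "integral {a..b} f = (LINT t:{a..b}|lborel. f t)"
    by (simp add: set_borel_integral_eq_integral(2)[OF Icc])
  also have "\<dots> \<le> (\<integral>t. f t \<partial>lborel)"
    unfolding set_lebesgue_integral_def
    by (intro integral_mono' f) (auto simp: indicator_def nonneg)
  finally show "integral {a..b} f \<le> (\<integral>t. f t \<partial>lborel)" .
qed

lemma lipschitz_on_norm_le_linear:
  fixes f :: "'a::real_normed_vector \<Rightarrow> 'b::real_normed_vector"
  assumes f: "L-lipschitz_on UNIV f"
  shows "norm (f x) \<le> (norm (f 0) + L) * (1 + norm x)"
proof -
  have "norm (f x) \<le> norm (f 0) + L * norm x"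
    using lipschitz_on_normD[OF f, of x 0] norm_triangle_ineq2[of "f x" "f 0"] by simp
  moreover have "0 \<le> norm (f 0) * norm x + L"
    using lipschitz_on_nonneg[OF f] by simp
  ultimately show ?thesis
    by (simp add: algebra_simps)
qed

lemma weighted_score_bound_Icc_lborel:
  fixes g G v H :: "real \<Rightarrow> real"
  assumes g: "\<And>t. (g has_real_derivative G t) (at t)"
    and v: "\<And>t. (v has_real_derivative H t) (at t)"
    and H: "L-lipschitz_on UNIV H"
    and int_G: "integrable lborel (\<lambda>t. (G t)\<^sup>2 * exp (- v t))"
    and int_g: "integrable lborel (\<lambda>t. (g t)\<^sup>2 * exp (- v t))"
    and "a \<le> b"
  shows "(\<integral>\<^sup>+t. ennreal ((g t)\<^sup>2 * (H t)\<^sup>2 * exp (- v t)) * indicator {a..b} t \<partial>lborel)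
    \<le> ennreal (4 * (\<integral>t. (G t)\<^sup>2 * exp (- v t) \<partial>lborel) + 2 * L * (\<integral>t. (g t)\<^sup>2 * exp (- v t) \<partial>lborel)
      + 2 * ((g a)\<^sup>2 * exp (- v a) * \<bar>H a\<bar>) + 2 * ((g b)\<^sup>2 * exp (- v b) * \<bar>H b\<bar>))"
proof -
  have "continuous_on {a..b} g" "continuous_on {a..b} v"
    using g v by (auto intro!: continuous_at_imp_continuous_on DERIV_isCont)
  moreover have "continuous_on {a..b} H"
    using lipschitz_on_continuous_on[OF H] by (rule continuous_on_subset) simp
  ultimately have "(\<integral>\<^sup>+t. ennreal ((g t)\<^sup>2 * (H t)\<^sup>2 * exp (- v t)) * indicator {a..b} t \<partial>lborel)
      = ennreal (integral {a..b} (\<lambda>t. (g t)\<^sup>2 * (H t)\<^sup>2 * exp (- v t)))"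
    by (intro nn_integral_has_integral_lebesgue' integrable_integral integrable_continuous_interval
        continuous_intros) auto
  also have "\<dots> \<le> ennreal (4 * (\<integral>t. (G t)\<^sup>2 * exp (- v t) \<partial>lborel) + 2 * L * (\<integral>t. (g t)\<^sup>2 * exp (- v t) \<partial>lborel)
      + 2 * ((g a)\<^sup>2 * exp (- v a) * \<bar>H a\<bar>) + 2 * ((g b)\<^sup>2 * exp (- v b) * \<bar>H b\<bar>))"
  proof (intro ennreal_leI)
    have "L * integral {a..b} (\<lambda>t. (g t)\<^sup>2 * exp (- v t)) \<le> L * (\<integral>t. (g t)\<^sup>2 * exp (- v t) \<partial>lborel)"
      using integrable_nonneg_Icc(2)[OF int_g] lipschitz_on_nonneg[OF H] by (intro mult_left_mono) auto
    then show "integral {a..b} (\<lambda>t. (g t)\<^sup>2 * (H t)\<^sup>2 * exp (- v t))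
      \<le> 4 * (\<integral>t. (G t)\<^sup>2 * exp (- v t) \<partial>lborel) + 2 * L * (\<integral>t. (g t)\<^sup>2 * exp (- v t) \<partial>lborel)
        + 2 * ((g a)\<^sup>2 * exp (- v a) * \<bar>H a\<bar>) + 2 * ((g b)\<^sup>2 * exp (- v b) * \<bar>H b\<bar>)"
      using weighted_score_bound_Icc[OF g v H integrable_nonneg_Icc(1)[OF int_G] \<open>a \<le> b\<close>]
        integrable_nonneg_Icc(2)[OF int_G, of a b] by simp
  qed
  finally show ?thesis .
qed

lemma weighted_score_bound_real_integrable:
  fixes g G v H :: "real \<Rightarrow> real"
  assumes g: "\<And>t. (g has_real_derivative G t) (at t)"
    and v: "\<And>t. (v has_real_derivative H t) (at t)"
    and H: "L-lipschitz_on UNIV H"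
    and int_G: "integrable lborel (\<lambda>t. (G t)\<^sup>2 * exp (- v t))"
    and int_g: "integrable lborel (\<lambda>t. (g t)\<^sup>2 * exp (- v t))"
  shows "(\<integral>\<^sup>+t. ennreal ((g t)\<^sup>2 * (H t)\<^sup>2 * exp (- v t)) \<partial>lborel)
    \<le> ennreal (4 * (\<integral>t. (G t)\<^sup>2 * exp (- v t) \<partial>lborel) + 2 * L * (\<integral>t. (g t)\<^sup>2 * exp (- v t) \<partial>lborel))"
    (is "?A \<le> ennreal ?R")
proof (rule ennreal_le_epsilon)
  have [measurable]: "g \<in> borel_measurable borel" "v \<in> borel_measurable borel" "H \<in> borel_measurable borel"
    using borel_measurable_has_derivative[OF g[unfolded has_field_derivative_def]]
      borel_measurable_has_derivative[OF v[unfolded has_field_derivative_def]]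
      lipschitz_on_continuous_on[OF H] by (auto intro: borel_measurable_continuous_onI)
  have "0 \<le> ?R"
    using lipschitz_on_nonneg[OF H] by (auto intro!: integral_nonneg_AE)
  fix e :: real
  assume "0 < e"
  show "?A \<le> ennreal ?R + ennreal e"
  proof (rule nn_integral_le_if_Icc_le)
    fix n :: nat
    obtain a b where ab: "a \<le> - real n" "real n \<le> b"
      "(g a)\<^sup>2 * exp (- v a) * \<bar>H a\<bar> \<le> e / 4" "(g b)\<^sup>2 * exp (- v b) * \<bar>H b\<bar> \<le> e / 4"
      using finite_nn_integral_ex_Icc_small[of "\<lambda>t. (g t)\<^sup>2 * exp (- v t)" H "\<bar>H 0\<bar> + L" "e / 4"]
        lipschitz_on_norm_le_linear[OF H] lipschitz_on_nonneg[OF H] int_g \<open>0 < e\<close>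
      by (force simp: nn_integral_eq_integral)
    have "(\<integral>\<^sup>+t. ennreal ((g t)\<^sup>2 * (H t)\<^sup>2 * exp (- v t)) * indicator {- real n..real n} t \<partial>lborel)
      \<le> (\<integral>\<^sup>+t. ennreal ((g t)\<^sup>2 * (H t)\<^sup>2 * exp (- v t)) * indicator {a..b} t \<partial>lborel)"
      using ab by (intro nn_integral_mono mult_left_mono) (auto simp: indicator_def)
    also have "\<dots> \<le> ennreal (?R + 2 * ((g a)\<^sup>2 * exp (- v a) * \<bar>H a\<bar>) + 2 * ((g b)\<^sup>2 * exp (- v b) * \<bar>H b\<bar>))"
      using ab by (intro weighted_score_bound_Icc_lborel[OF g v H int_G int_g]) simp
    also have "\<dots> \<le> ennreal ?R + ennreal e"
      using ab \<open>0 \<le> ?R\<close> \<open>0 < e\<close> by (simp flip: ennreal_plus)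
    finally show "(\<integral>\<^sup>+t. ennreal ((g t)\<^sup>2 * (H t)\<^sup>2 * exp (- v t)) * indicator {- real n..real n} t \<partial>lborel)
      \<le> ennreal ?R + ennreal e" .
  qed measurable
qed

lemma weighted_score_bound_real:
  fixes g G v H :: "real \<Rightarrow> real"
  assumes g: "\<And>t. (g has_real_derivative G t) (at t)"
    and v: "\<And>t. (v has_real_derivative H t) (at t)"
    and H: "L-lipschitz_on UNIV H"
    and [measurable]: "G \<in> borel_measurable borel"
    and fin: "(\<integral>\<^sup>+t. ennreal ((g t)\<^sup>2 * exp (- v t)) \<partial>lborel) \<noteq> \<infinity>"
  shows "(\<integral>\<^sup>+t. ennreal ((g t)\<^sup>2 * (H t)\<^sup>2 * exp (- v t)) \<partial>lborel)
    \<le> 4 * (\<integral>\<^sup>+t. ennreal ((G t)\<^sup>2 * exp (- v t)) \<partial>lborel)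
      + ennreal (2 * L) * (\<integral>\<^sup>+t. ennreal ((g t)\<^sup>2 * exp (- v t)) \<partial>lborel)"
proof (cases "(\<integral>\<^sup>+t. ennreal ((G t)\<^sup>2 * exp (- v t)) \<partial>lborel) = \<infinity>")
  case True
  then show ?thesis by (simp add: ennreal_mult_eq_top_iff)
next
  case False
  have [measurable]: "g \<in> borel_measurable borel" "v \<in> borel_measurable borel"
    using borel_measurable_has_derivative[OF g[unfolded has_field_derivative_def]]
      borel_measurable_has_derivative[OF v[unfolded has_field_derivative_def]] .
  have int_G: "integrable lborel (\<lambda>t. (G t)\<^sup>2 * exp (- v t))"
    using False by (intro integrableI_nonneg) (auto simp: top.not_eq_extremum)
  have int_g: "integrable lborel (\<lambda>t. (g t)\<^sup>2 * exp (- v t))"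
    using fin by (intro integrableI_nonneg) (auto simp: top.not_eq_extremum)
  define B where "B = (\<integral>t. (G t)\<^sup>2 * exp (- v t) \<partial>lborel)"
  define C where "C = (\<integral>t. (g t)\<^sup>2 * exp (- v t) \<partial>lborel)"
  have "(\<integral>\<^sup>+t. ennreal ((G t)\<^sup>2 * exp (- v t)) \<partial>lborel) = ennreal B"
    "(\<integral>\<^sup>+t. ennreal ((g t)\<^sup>2 * exp (- v t)) \<partial>lborel) = ennreal C"
    unfolding B_def C_def using int_G int_g by (simp_all add: nn_integral_eq_integral)
  moreover have "ennreal (4 * B + 2 * L * C) = 4 * ennreal B + ennreal (2 * L) * ennreal C"
    using lipschitz_on_nonneg[OF H] unfolding B_def C_def
    by (simp add: integral_nonneg_AE ennreal_plus ennreal_mult)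
  ultimately show ?thesis
    using weighted_score_bound_real_integrable[OF g v H int_G int_g] unfolding B_def C_def by simp
qed

section \<open>Reduction to coordinate lines\<close>

lemma nn_integral_lborel_along_Basis:
  fixes f :: "'a::euclidean_space \<Rightarrow> ennreal"
  assumes e: "e \<in> Basis" and [measurable]: "f \<in> borel_measurable borel"
  shows "(\<integral>\<^sup>+x. f x \<partial>lborel) = (\<integral>\<^sup>+y. (\<integral>\<^sup>+t. f ((\<Sum>b\<in>Basis - {e}. y b *\<^sub>R b) + t *\<^sub>R e) \<partial>lborel)
      \<partial>(\<Pi>\<^sub>M b\<in>Basis - {e}. lborel))"
proof -
  interpret product_sigma_finite "\<lambda>_::'a. lborel :: real measure"
    by standard
  have split: "(\<Sum>b\<in>Basis. (y(e := t)) b *\<^sub>R b) = (\<Sum>b\<in>Basis - {e}. y b *\<^sub>R b) + t *\<^sub>R e" for y t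
  proof -
    have "(\<Sum>b\<in>Basis - {e}. (y(e := t)) b *\<^sub>R b) = (\<Sum>b\<in>Basis - {e}. y b *\<^sub>R b)"
      by (rule sum.cong) auto
    then show ?thesis
      using e by (simp add: sum.remove)
  qed
  have "(\<integral>\<^sup>+x. f x \<partial>lborel) = (\<integral>\<^sup>+y. f (\<Sum>b\<in>Basis. y b *\<^sub>R b) \<partial>(\<Pi>\<^sub>M b\<in>insert e (Basis - {e}). lborel))"
    using e by (subst lborel_eq) (simp add: nn_integral_distr insert_absorb)
  also have "\<dots> = (\<integral>\<^sup>+y. (\<integral>\<^sup>+t. f (\<Sum>b\<in>Basis. (y(e := t)) b *\<^sub>R b) \<partial>lborel) \<partial>(\<Pi>\<^sub>M b\<in>Basis - {e}. lborel))"
    using e by (intro product_nn_integral_insert) (auto simp: insert_absorb)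
  finally show ?thesis
    unfolding split .
qed

lemma has_real_derivative_along_line:
  fixes f :: "'a::real_inner \<Rightarrow> real"
  assumes "\<And>x. (f has_derivative (\<lambda>h. D x \<bullet> h)) (at x)"
  shows "((\<lambda>t. f (x + t *\<^sub>R e)) has_real_derivative D (x + t *\<^sub>R e) \<bullet> e) (at t)"
proof -
  have "((\<lambda>t. x + t *\<^sub>R e) has_derivative (\<lambda>h. h *\<^sub>R e)) (at t)"
    by (auto intro!: derivative_eq_intros)
  from has_derivative_compose[OF this assms]
  show ?thesis
    unfolding has_field_derivative_def by (simp add: o_def mult.commute[of _ "D _ \<bullet> e"] mult_commute_abs)
qed

lemma borel_measurable_gradient_inner:
  fixes f :: "'a::euclidean_space \<Rightarrow> real"
  assumes f: "\<And>x. (f has_derivative (\<lambda>h. D x \<bullet> h)) (at x)"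
  shows "(\<lambda>x. D x \<bullet> e) \<in> borel_measurable borel"
proof (rule borel_measurable_LIMSEQ_real)
  define u where "u n x = (f (x + inverse (Suc n) *\<^sub>R e) - f x) / inverse (Suc n)" for n :: nat and x
  have cont: "continuous_on UNIV f"
    using f has_derivative_continuous by (blast intro: continuous_at_imp_continuous_on)
  show "(\<lambda>n. u n x) \<longlonglongrightarrow> D x \<bullet> e" for x
  proof -
    have "((\<lambda>h. (f (x + h *\<^sub>R e) - f x) / h) \<longlongrightarrow> D x \<bullet> e) (at 0)"
      using has_real_derivative_along_line[OF f, of x e 0] unfolding DERIV_def by simp
    moreover have "filterlim (\<lambda>n. inverse (real (Suc n))) (at 0) sequentially"
      unfolding filterlim_at using LIMSEQ_inverse_real_of_nat by auto
    ultimately show ?thesis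
      unfolding u_def by (rule filterlim_compose)
  qed
  show "u n \<in> borel_measurable borel" for n
  proof -
    have "continuous_on UNIV (\<lambda>x. f (x + inverse (Suc n) *\<^sub>R e))"
      by (rule continuous_on_compose2[OF cont]) (auto intro: continuous_intros)
    then show ?thesis
      unfolding u_def by (intro borel_measurable_continuous_onI continuous_intros cont) auto
  qed
qed

lemma lipschitz_on_inner_along_Basis:
  fixes f :: "'a::euclidean_space \<Rightarrow> 'a"
  assumes f: "L-lipschitz_on UNIV f" and e: "e \<in> Basis"
  shows "L-lipschitz_on UNIV (\<lambda>t. f (x + t *\<^sub>R e) \<bullet> e)"
proof (rule lipschitz_onI)
  fix s t :: real
  have "dist (f (x + s *\<^sub>R e) \<bullet> e) (f (x + t *\<^sub>R e) \<bullet> e) \<le> norm (f (x + s *\<^sub>R e) - f (x + t *\<^sub>R e))"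
    using Basis_le_norm[OF e] by (simp add: dist_real_def flip: inner_diff_left)
  also have "\<dots> \<le> L * dist (x + s *\<^sub>R e) (x + t *\<^sub>R e)"
    using lipschitz_onD[OF f, of "x + s *\<^sub>R e" "x + t *\<^sub>R e"] by (simp add: dist_norm)
  also have "dist (x + s *\<^sub>R e) (x + t *\<^sub>R e) = dist s t"
    using e by (simp add: dist_norm flip: scaleR_diff_left)
  finally show "dist (f (x + s *\<^sub>R e) \<bullet> e) (f (x + t *\<^sub>R e) \<bullet> e) \<le> L * dist s t" .
qed (rule lipschitz_on_nonneg[OF f])

lemma weighted_score_bound_Basis:
  fixes V \<phi> :: "'a::euclidean_space \<Rightarrow> real" and gradV g\<phi> :: "'a \<Rightarrow> 'a"
  assumes V: "\<And>x. (V has_derivative (\<lambda>h. gradV x \<bullet> h)) (at x)"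
    and gradV: "L-lipschitz_on UNIV gradV"
    and \<phi>: "\<And>x. (\<phi> has_derivative (\<lambda>h. g\<phi> x \<bullet> h)) (at x)"
    and fin: "(\<integral>\<^sup>+x. ennreal ((\<phi> x)\<^sup>2 * exp (- V x)) \<partial>lborel) \<noteq> \<infinity>"
    and e: "e \<in> Basis"
  shows "(\<integral>\<^sup>+x. ennreal ((\<phi> x)\<^sup>2 * (gradV x \<bullet> e)\<^sup>2 * exp (- V x)) \<partial>lborel)
    \<le> 4 * (\<integral>\<^sup>+x. ennreal ((g\<phi> x \<bullet> e)\<^sup>2 * exp (- V x)) \<partial>lborel)
      + ennreal (2 * L) * (\<integral>\<^sup>+x. ennreal ((\<phi> x)\<^sup>2 * exp (- V x)) \<partial>lborel)"
proof -
  have [measurable]: "V \<in> borel_measurable borel" "\<phi> \<in> borel_measurable borel" "gradV \<in> borel_measurable borel"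
    "(\<lambda>x. g\<phi> x \<bullet> e) \<in> borel_measurable borel"
    using borel_measurable_has_derivative[OF V] borel_measurable_has_derivative[OF \<phi>]
      borel_measurable_gradient_inner[OF \<phi>] lipschitz_on_continuous_on[OF gradV]
    by (auto intro: borel_measurable_continuous_onI)
  let ?M = "\<Pi>\<^sub>M b\<in>Basis - {e}. (lborel :: real measure)"
  let ?x = "\<lambda>y t. (\<Sum>b\<in>Basis - {e}. y b *\<^sub>R b) + t *\<^sub>R e"
  define A where "A y = (\<integral>\<^sup>+t. ennreal ((\<phi> (?x y t))\<^sup>2 * (gradV (?x y t) \<bullet> e)\<^sup>2 * exp (- V (?x y t))) \<partial>lborel)" for y
  define G where "G y = (\<integral>\<^sup>+t. ennreal ((g\<phi> (?x y t) \<bullet> e)\<^sup>2 * exp (- V (?x y t))) \<partial>lborel)" for y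
  define C where "C y = (\<integral>\<^sup>+t. ennreal ((\<phi> (?x y t))\<^sup>2 * exp (- V (?x y t))) \<partial>lborel)" for y
  have [measurable]: "G \<in> borel_measurable ?M" "C \<in> borel_measurable ?M"
    unfolding G_def C_def by measurable
  have line: "A y \<le> 4 * G y + ennreal (2 * L) * C y" if "C y \<noteq> \<infinity>" for y
    unfolding A_def G_def C_def
  proof (rule weighted_score_bound_real)
    show "((\<lambda>t. \<phi> (?x y t)) has_real_derivative g\<phi> (?x y t) \<bullet> e) (at t)"
      "((\<lambda>t. V (?x y t)) has_real_derivative gradV (?x y t) \<bullet> e) (at t)" for t
      using has_real_derivative_along_line[OF \<phi>] has_real_derivative_along_line[OF V] by auto
    show "L-lipschitz_on UNIV (\<lambda>t. gradV (?x y t) \<bullet> e)"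
      by (rule lipschitz_on_inner_along_Basis[OF gradV e])
  qed (use that in \<open>auto simp: C_def\<close>)
  have A: "(\<integral>\<^sup>+x. ennreal ((\<phi> x)\<^sup>2 * (gradV x \<bullet> e)\<^sup>2 * exp (- V x)) \<partial>lborel) = integral\<^sup>N ?M A"
    and G: "(\<integral>\<^sup>+x. ennreal ((g\<phi> x \<bullet> e)\<^sup>2 * exp (- V x)) \<partial>lborel) = integral\<^sup>N ?M G"
    and C: "(\<integral>\<^sup>+x. ennreal ((\<phi> x)\<^sup>2 * exp (- V x)) \<partial>lborel) = integral\<^sup>N ?M C"
    unfolding A_def G_def C_def by (rule nn_integral_lborel_along_Basis[OF e], measurable)+
  have "AE y in ?M. C y \<noteq> \<infinity>"
    using fin unfolding C by (intro nn_integral_PInf_AE) auto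
  then have "integral\<^sup>N ?M A \<le> integral\<^sup>N ?M (\<lambda>y. 4 * G y + ennreal (2 * L) * C y)"
    using line by (auto intro!: nn_integral_mono_AE)
  also have "\<dots> = 4 * integral\<^sup>N ?M G + ennreal (2 * L) * integral\<^sup>N ?M C"
    by (simp add: nn_integral_add nn_integral_cmult)
  finally show ?thesis
    unfolding A G C .
qed

lemma nn_integral_power2_norm_Basis:
  fixes u :: "'a \<Rightarrow> 'b::euclidean_space" and w :: "'a \<Rightarrow> real"
  assumes [measurable]: "\<And>b. (\<lambda>x. u x \<bullet> b) \<in> borel_measurable M" "w \<in> borel_measurable M"
    and w: "\<And>x. 0 \<le> w x"
  shows "(\<integral>\<^sup>+x. ennreal (w x * (norm (u x))\<^sup>2) \<partial>M) = (\<Sum>b\<in>Basis. \<integral>\<^sup>+x. ennreal (w x * (u x \<bullet> b)\<^sup>2) \<partial>M)"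
proof -
  have "(norm v)\<^sup>2 = (\<Sum>b\<in>Basis. (v \<bullet> b)\<^sup>2)" for v :: 'b
    unfolding power2_norm_eq_inner by (subst euclidean_inner) (simp add: power2_eq_square)
  then have "(\<integral>\<^sup>+x. ennreal (w x * (norm (u x))\<^sup>2) \<partial>M) = (\<integral>\<^sup>+x. (\<Sum>b\<in>Basis. ennreal (w x * (u x \<bullet> b)\<^sup>2)) \<partial>M)"
    using w by (simp add: sum_distrib_left)
  also have "\<dots> = (\<Sum>b\<in>Basis. \<integral>\<^sup>+x. ennreal (w x * (u x \<bullet> b)\<^sup>2) \<partial>M)"
    by (rule nn_integral_sum) auto
  finally show ?thesis .
qed

lemma weighted_score_bound:
  fixes V \<phi> :: "'a::euclidean_space \<Rightarrow> real" and gradV g\<phi> :: "'a \<Rightarrow> 'a" and L :: real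
  assumes V: "\<And>x. (V has_derivative (\<lambda>h. gradV x \<bullet> h)) (at x)"
    and gradV: "L-lipschitz_on UNIV gradV"
    and \<phi>: "\<And>x. (\<phi> has_derivative (\<lambda>h. g\<phi> x \<bullet> h)) (at x)"
    and fin: "(\<integral>\<^sup>+x. ennreal ((\<phi> x)\<^sup>2 * exp (- V x)) \<partial>lborel) \<noteq> \<infinity>"
  shows "(\<integral>\<^sup>+x. ennreal ((\<phi> x)\<^sup>2 * exp (- V x) * (norm (gradV x))\<^sup>2) \<partial>lborel)
    \<le> 4 * (\<integral>\<^sup>+x. ennreal (exp (- V x) * (norm (g\<phi> x))\<^sup>2) \<partial>lborel)
      + ennreal (2 * real DIM('a) * L) * (\<integral>\<^sup>+x. ennreal ((\<phi> x)\<^sup>2 * exp (- V x)) \<partial>lborel)"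
proof -
  have [measurable]: "V \<in> borel_measurable borel" "\<phi> \<in> borel_measurable borel" "gradV \<in> borel_measurable borel"
    "\<And>b. (\<lambda>x. g\<phi> x \<bullet> b) \<in> borel_measurable borel"
    using borel_measurable_has_derivative[OF V] borel_measurable_has_derivative[OF \<phi>]
      borel_measurable_gradient_inner[OF \<phi>] lipschitz_on_continuous_on[OF gradV]
    by (auto intro: borel_measurable_continuous_onI)
  have "(\<integral>\<^sup>+x. ennreal ((\<phi> x)\<^sup>2 * exp (- V x) * (norm (gradV x))\<^sup>2) \<partial>lborel)
    = (\<Sum>b\<in>Basis. \<integral>\<^sup>+x. ennreal ((\<phi> x)\<^sup>2 * (gradV x \<bullet> b)\<^sup>2 * exp (- V x)) \<partial>lborel)"
    by (subst nn_integral_power2_norm_Basis) (auto simp: mult_ac)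
  also have "\<dots> \<le> (\<Sum>b\<in>(Basis::'a set). 4 * (\<integral>\<^sup>+x. ennreal ((g\<phi> x \<bullet> b)\<^sup>2 * exp (- V x)) \<partial>lborel)
      + ennreal (2 * L) * (\<integral>\<^sup>+x. ennreal ((\<phi> x)\<^sup>2 * exp (- V x)) \<partial>lborel))"
    by (intro sum_mono weighted_score_bound_Basis[OF V gradV \<phi> fin])
  also have "\<dots> = 4 * (\<integral>\<^sup>+x. ennreal (exp (- V x) * (norm (g\<phi> x))\<^sup>2) \<partial>lborel)
      + ennreal (2 * real DIM('a) * L) * (\<integral>\<^sup>+x. ennreal ((\<phi> x)\<^sup>2 * exp (- V x)) \<partial>lborel)"
    using lipschitz_on_nonneg[OF gradV]
    by (subst nn_integral_power2_norm_Basis)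
      (auto simp: sum.distrib sum_distrib_left mult_ac ennreal_mult ennreal_of_nat_eq_real_of_nat)
  finally show ?thesis .
qed

lemma normalized_weighted_score_bound:
  fixes V \<phi> :: "'a::euclidean_space \<Rightarrow> real" and gradV g\<phi> :: "'a \<Rightarrow> 'a" and L :: real
  assumes V: "\<And>x. (V has_derivative (\<lambda>h. gradV x \<bullet> h)) (at x)"
    and gradV: "L-lipschitz_on UNIV gradV"
    and \<phi>: "\<And>x. (\<phi> has_derivative (\<lambda>h. g\<phi> x \<bullet> h)) (at x)"
    and N: "(\<integral>\<^sup>+x. ennreal ((\<phi> x)\<^sup>2 * exp (- V x)) \<partial>lborel) = ennreal N" and "0 < N"
  shows "(\<integral>\<^sup>+x. ennreal ((\<phi> x)\<^sup>2 * exp (- V x) / N * (norm (gradV x))\<^sup>2) \<partial>lborel)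
    \<le> ennreal (4 / N) * (\<integral>\<^sup>+x. ennreal (exp (- V x) * (norm (g\<phi> x))\<^sup>2) \<partial>lborel)
      + ennreal (2 * real DIM('a) * L)"
proof -
  have [measurable]: "V \<in> borel_measurable borel" "\<phi> \<in> borel_measurable borel" "gradV \<in> borel_measurable borel"
    using borel_measurable_has_derivative[OF V] borel_measurable_has_derivative[OF \<phi>]
      lipschitz_on_continuous_on[OF gradV] by (auto intro: borel_measurable_continuous_onI)
  have "ennreal ((\<phi> x)\<^sup>2 * exp (- V x) / N * (norm (gradV x))\<^sup>2)
    = ennreal (1 / N) * ennreal ((\<phi> x)\<^sup>2 * exp (- V x) * (norm (gradV x))\<^sup>2)" for x
    using \<open>0 < N\<close> by (subst ennreal_mult[symmetric]) auto
  then have "(\<integral>\<^sup>+x. ennreal ((\<phi> x)\<^sup>2 * exp (- V x) / N * (norm (gradV x))\<^sup>2) \<partial>lborel)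
    = ennreal (1 / N) * (\<integral>\<^sup>+x. ennreal ((\<phi> x)\<^sup>2 * exp (- V x) * (norm (gradV x))\<^sup>2) \<partial>lborel)"
    by (simp only:) (rule nn_integral_cmult, measurable)
  also have "\<dots> \<le> ennreal (1 / N) * (4 * (\<integral>\<^sup>+x. ennreal (exp (- V x) * (norm (g\<phi> x))\<^sup>2) \<partial>lborel)
      + ennreal (2 * real DIM('a) * L) * ennreal N)"
    using weighted_score_bound[OF V gradV \<phi>] N by (intro mult_left_mono) auto
  also have "\<dots> = ennreal (4 / N) * (\<integral>\<^sup>+x. ennreal (exp (- V x) * (norm (g\<phi> x))\<^sup>2) \<partial>lborel)
      + ennreal (2 * real DIM('a) * L)"
  proof -
    have "ennreal (4 / N) = ennreal (1 / N) * ennreal 4"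
      using \<open>0 < N\<close> by (subst ennreal_mult[symmetric]) auto
    moreover have "ennreal (1 / N) * (ennreal (2 * real DIM('a) * L) * ennreal N) = ennreal (2 * real DIM('a) * L)"
      using \<open>0 < N\<close> lipschitz_on_nonneg[OF gradV] by (simp flip: ennreal_mult)
    ultimately show ?thesis
      by (simp add: distrib_left mult.assoc)
  qed
  finally show ?thesis .
qed

section \<open>The densities p and q\<close>

lemma lipschitz_on_UNIV_normI:
  fixes f :: "'a::euclidean_space \<Rightarrow> 'b::real_normed_vector"
  assumes "\<And>x y. norm (f x - f y) \<le> L * norm (x - y)"
  shows "L-lipschitz_on UNIV f"
proof (rule lipschitz_onI)
  obtain b :: 'a where "b \<in> Basis"
    using nonempty_Basis by blast
  then show "0 \<le> L"
    using assms[of b 0] by simp (meson norm_ge_zero order_trans)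
qed (simp add: dist_norm assms)

lemma integral_exp_pos:
  fixes f :: "'a::euclidean_space \<Rightarrow> real"
  assumes "integrable lborel (\<lambda>x. exp (f x))"
  shows "0 < (\<integral>x. exp (f x) \<partial>lborel)"
proof -
  have "\<not> (AE x in lborel. exp (f x) = 0)"
    using ae_filter_eq_bot_iff[of "lborel :: 'a measure"] by (simp add: trivial_limit_def)
  then show ?thesis
    using integral_nonneg_eq_0_iff_AE[OF assms] integral_nonneg_AE[of "\<lambda>x. exp (f x)" lborel]
    by (simp add: order_less_le)
qed

lemma chi2_plus_one:
  fixes p q :: "'a::euclidean_space \<Rightarrow> real"
  assumes p: "\<And>x. 0 < p x" and int: "integrable lborel (\<lambda>x. (q x)\<^sup>2 / p x)"
    and q: "(LINT x|lborel. q x) = 1"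
  shows "(LINT x|lborel. (q x / p x)\<^sup>2 * p x) = chi2 q p + 1"
    and "(\<integral>\<^sup>+x. ennreal ((q x / p x)\<^sup>2 * p x) \<partial>lborel) = ennreal (chi2 q p + 1)"
    and "0 < chi2 q p + 1"
proof -
  have sq: "(q x / p x)\<^sup>2 * p x = (q x)\<^sup>2 / p x" for x
    using p[of x] by (simp add: power2_eq_square)
  then show int_eq: "(LINT x|lborel. (q x / p x)\<^sup>2 * p x) = chi2 q p + 1"
    unfolding chi2_def by simp
  have "\<not> (AE x in lborel. (q x)\<^sup>2 / p x = 0)"
  proof
    assume "AE x in lborel. (q x)\<^sup>2 / p x = 0"
    then have "AE x in lborel. q x = 0"
      by (rule eventually_mono) (use p in \<open>auto simp: less_imp_neq[symmetric]\<close>)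
    then show False
      using q integral_eq_zero_AE[of q lborel] by simp
  qed
  then have "(LINT x|lborel. (q x)\<^sup>2 / p x) \<noteq> 0"
    using integral_nonneg_eq_0_iff_AE[OF int] p by (simp add: less_imp_le)
  moreover have "0 \<le> (LINT x|lborel. (q x)\<^sup>2 / p x)"
    using p by (intro integral_nonneg_AE) (simp add: less_imp_le)
  ultimately show "0 < chi2 q p + 1"
    unfolding chi2_def by simp
  show "(\<integral>\<^sup>+x. ennreal ((q x / p x)\<^sup>2 * p x) \<partial>lborel) = ennreal (chi2 q p + 1)"
    using int p unfolding int_eq[symmetric] sq by (intro nn_integral_eq_integral) (auto simp: less_imp_le)
qed

theorem corollary2:
  fixes V :: "'a::euclidean_space \<Rightarrow> real"
    and gradV :: "'a \<Rightarrow> 'a"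
    and p q :: "'a \<Rightarrow> real"
    and gphi :: "'a \<Rightarrow> 'a"
    and L :: real
  assumes V_grad: "\<And>x. (V has_derivative (\<lambda>h. gradV x \<bullet> h)) (at x)"
    and gradV_Lip: "\<And>x y. norm (gradV x - gradV y) \<le> L * norm (x - y)"
    and Z_int: "integrable lborel (\<lambda>x. exp (- V x))"
    and p_def: "p = (\<lambda>x. exp (- V x) / (LINT y|lborel. exp (- V y)))"
    and q_meas: "q \<in> borel_measurable lborel"
    and q_nonneg: "\<And>x. q x \<ge> 0"
    and q_int: "integrable lborel q"
    and q_norm: "(LINT x|lborel. q x) = 1"
    and chi2_fin: "integrable lborel (\<lambda>x. (q x)\<^sup>2 / p x)"
    and phi_grad: "\<And>x. ((\<lambda>y. q y / p y) has_derivative (\<lambda>h. gphi x \<bullet> h)) (at x)"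
  shows "(\<integral>\<^sup>+ x. ennreal ((q x / p x) / (LINT y|lborel. (q y / p y)\<^sup>2 * p y) * q x
              * (norm (- gradV x))\<^sup>2) \<partial>lborel)
         \<le> ennreal (4 / (chi2 q p + 1)) * rel_fisher p gphi
            + ennreal (2 * real DIM('a) * L)"
proof -
  define W where "W x = V x + ln (LINT y|lborel. exp (- V y))" for x
  have p_exp: "p x = exp (- W x)" for x
    using integral_exp_pos[of "\<lambda>x. - V x"] Z_int unfolding p_def W_def
    by (simp add: exp_diff exp_minus field_simps)
  have W: "(W has_derivative (\<lambda>h. gradV x \<bullet> h)) (at x)" for x
    unfolding W_def using V_grad[of x] by (auto intro!: derivative_eq_intros)
  have "0 < p x" for x
    by (simp add: p_exp)
  note N = chi2_plus_one[OF this chi2_fin q_norm]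
  have "(\<integral>\<^sup>+ x. ennreal ((q x / p x) / (LINT y|lborel. (q y / p y)\<^sup>2 * p y) * q x
      * (norm (- gradV x))\<^sup>2) \<partial>lborel)
    = (\<integral>\<^sup>+x. ennreal ((q x / p x)\<^sup>2 * exp (- W x) / (chi2 q p + 1) * (norm (gradV x))\<^sup>2) \<partial>lborel)"
    unfolding N(1) by (simp add: p_exp power2_eq_square)
  also have "\<dots> \<le> ennreal (4 / (chi2 q p + 1)) * rel_fisher p gphi + ennreal (2 * real DIM('a) * L)"
    using normalized_weighted_score_bound[OF W lipschitz_on_UNIV_normI[OF gradV_Lip] phi_grad _ N(3)] N(2)
    unfolding rel_fisher_def p_exp by (simp add: mult.commute)
  finally show ?thesis .
qed

end
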